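(* Each of the following sequences $(a_n)_{n\ge0}$ has the property that, for every $n\ge0$, the polynomial $\sum_{i=0}^n a_ix^i$ has exactly $n\bmod 2$ real roots counted with multiplicity: $a_n=\binom{n+k}{k}$ for any fixed integer $k\ge 0$; the Catalan numbers $a_n=\frac{1}{n+1}\binom{2n}{n}$; $a_n=\binom{2n}{n}$; $a_n=\binom{2n+1}{n}$; $a_n=n!$; $a_n=(2n-1)!!$; $a_n=(2n)!!$.
   Context: $(2n-1)!!=1\cdot3\cdots(2n-1)$ and $(2n)!!=2\cdot4\cdots(2n)$, with both equal to $1$ for $n=0$. *)

theory Defs
  imports "HOL-Computational_Algebra.Polynomial"
begin

definition partial_poly :: "(nat \<Rightarrow> real) \<Rightarrow> nat \<Rightarrow> real poly" where
  "partial_poly a n = (\<Sum>i\<le>n. monom (a i) i)"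

definition num_real_roots :: "real poly \<Rightarrow> nat" where
  "num_real_roots p = size (proots p)"

definition parity_roots_property :: "(nat \<Rightarrow> real) \<Rightarrow> bool" where
  "parity_roots_property a \<longleftrightarrow> (\<forall>n. num_real_roots (partial_poly a n) = n mod 2)"

(* (2n-1)!! = 1*3*...*(2n-1), (2n)!! = 2*4*...*(2n), both 1 for n = 0 *)
definition odd_dfact :: "nat \<Rightarrow> nat" where
  "odd_dfact n = (\<Prod>i\<in>{1..n}. 2 * i - 1)"

definition even_dfact :: "nat \<Rightarrow> nat" where
  "even_dfact n = (\<Prod>i\<in>{1..n}. 2 * i)"

end

theory Submission
  imports Defs
begin

text \<open>For even \<open>n\<close> the partial sum \<open>p\<close> has no real root; for odd \<open>n\<close> it changes sign and
  \<open>p' > 0\<close> at each of its roots, so it has exactly one root, which is simple. Only \<open>x < 0\<close>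
  needs work. For the log-convex sequences (nondecreasing ratio \<open>a (n + 1) / a n\<close>: central binomials,
  Catalan numbers, factorials, double factorials) the terms \<open>a i * \<bar>x\<bar> ^ i\<close> stay log-convex, so they
  first decrease and then increase, and grouping the alternating sum around the minimum gives the
  required signs. For \<open>a n = (n + k) choose k\<close> one inducts on \<open>k\<close> instead.\<close>

lemma partial_poly_Suc:
  "partial_poly a (Suc n) = partial_poly a n + monom (a (Suc n)) (Suc n)"
  by (simp add: partial_poly_def)

lemma poly_partial_poly: "poly (partial_poly a n) x = (\<Sum>i\<le>n. a i * x ^ i)"
  by (simp add: partial_poly_def poly_sum poly_monom)

lemma pderiv_partial_poly_Suc:
  "pderiv (partial_poly a (Suc n)) = partial_poly (\<lambda>i. real (Suc i) * a (Suc i)) n"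
proof (induction n)
  case 0
  then show ?case by (simp add: partial_poly_def pderiv_add pderiv_monom)
next
  case (Suc n)
  then show ?case
    by (simp only: partial_poly_Suc[of _ "Suc n"] partial_poly_Suc[of _ n] pderiv_add pderiv_monom) simp
qed

lemma poly_pderiv_partial_poly:
  "x * poly (pderiv (partial_poly a n)) x = (\<Sum>i\<le>n. real i * a i * x ^ i)"
proof (cases n)
  case 0
  then show ?thesis by (simp add: partial_poly_def pderiv_monom)
next
  case (Suc m)
  have "x * poly (pderiv (partial_poly a n)) x = (\<Sum>j\<le>m. real (Suc j) * a (Suc j) * x ^ Suc j)"
    unfolding Suc pderiv_partial_poly_Suc poly_partial_poly sum_distrib_left
    by (intro sum.cong) (simp_all add: mult_ac)
  also have "\<dots> = (\<Sum>i\<le>n. real i * a i * x ^ i)"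
    unfolding Suc sum.atMost_Suc_shift by simp
  finally show ?thesis .
qed

lemma poly_partial_poly_reflect:
  "poly (partial_poly a n) x = (\<Sum>i\<le>n. (-1) ^ i * (a i * (-x) ^ i))"
  unfolding poly_partial_poly by (intro sum.cong) (simp_all add: power_minus[of x])

lemma poly_partial_poly_pos:
  assumes "\<And>i. a i \<ge> 0" and "a 0 > 0" and "x \<ge> 0"
  shows "poly (partial_poly a n) x > 0"
proof -
  have "a 0 * x ^ 0 \<le> (\<Sum>i\<le>n. a i * x ^ i)"
    using assms by (intro member_le_sum) auto
  then show ?thesis
    using assms(2) by (simp add: poly_partial_poly)
qed

text \<open>At \<open>-T\<close> with \<open>T = 1 + (a 0 + \<dots> + a (n - 1)) / a n\<close> the leading term dominates.\<close>
lemma poly_partial_poly_odd_neg: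
  assumes nonneg: "\<And>i. a i \<ge> 0" and lead: "a n > 0" and "odd n"
  obtains x where "poly (partial_poly a n) x < 0"
proof -
  obtain m where n: "n = Suc m"
    using \<open>odd n\<close> by (cases n) auto
  define S where "S = (\<Sum>i\<le>m. a i)"
  define T where "T = 1 + S / a n"
  have "S \<ge> 0"
    unfolding S_def using nonneg by (intro sum_nonneg) auto
  then have T: "T \<ge> 1" and S: "S = a n * (T - 1)"
    using lead unfolding T_def by auto
  have "(\<Sum>i\<le>m. a i * (-T) ^ i) \<le> (\<Sum>i\<le>m. a i * T ^ m)"
  proof (intro sum_mono mult_left_mono)
    fix i assume "i \<in> {..m}"
    have "(-T) ^ i \<le> T ^ i"
      using abs_ge_self[of "(-T) ^ i"] T by (simp add: power_abs)
    also have "\<dots> \<le> T ^ m"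
      using T \<open>i \<in> {..m}\<close> by (intro power_increasing) auto
    finally show "(-T) ^ i \<le> T ^ m" .
  qed (use nonneg in auto)
  then have "poly (partial_poly a n) (-T) \<le> S * T ^ m - a n * T ^ n"
    using \<open>odd n\<close> by (simp add: poly_partial_poly n S_def sum_distrib_right power_minus_odd)
  also have "\<dots> = - (a n * T ^ m)"
    unfolding S n by (simp add: algebra_simps)
  also have "\<dots> < 0"
    using lead T by simp
  finally show ?thesis
    using that by blast
qed

lemma num_real_roots_eq_0:
  assumes "\<And>x. poly p x \<noteq> 0"
  shows "num_real_roots p = 0"
proof -
  have "p \<noteq> 0"
    using assms by auto
  then have "proots p = {#}"
    using assms order_root by (intro multiset_eqI) auto
  then show ?thesis
    by (simp add: num_real_roots_def)
qed

text \<open>If \<open>x < y\<close> were consecutive roots, \<open>p\<close> would be positive just right of \<open>x\<close> and negative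
  just left of \<open>y\<close>, so the intermediate value theorem would give a root in between.\<close>
lemma roots_unique_if_pderiv_pos:
  fixes p :: "real poly"
  assumes "p \<noteq> 0" and pderiv_pos: "\<And>x. poly p x = 0 \<Longrightarrow> poly (pderiv p) x > 0"
    and "poly p x = 0" "poly p y = 0"
  shows "x = y"
proof (rule ccontr)
  assume "x \<noteq> y"
  then obtain x1 x2 where root1: "poly p x1 = 0" and root2: "poly p x2 = 0" and "x1 < x2"
    using assms(3,4) by (metis linorder_neq_iff)
  define R where "R = {r. poly p r = 0 \<and> x1 < r \<and> r \<le> x2}"
  have "finite R"
    unfolding R_def by (rule finite_subset[OF _ poly_roots_finite[OF \<open>p \<noteq> 0\<close>]]) auto
  moreover have "x2 \<in> R"
    using root2 \<open>x1 < x2\<close> by (simp add: R_def)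
  ultimately have "Min R \<in> R"
    by (intro Min_in) auto
  have R_min: "\<And>r. r \<in> R \<Longrightarrow> Min R \<le> r"
    using \<open>finite R\<close> by simp
  define z where "z = Min R"
  have root_z: "poly p z = 0" and "x1 < z"
    using \<open>Min R \<in> R\<close> by (auto simp: R_def z_def)
  obtain d1 where "d1 > 0" and d1: "\<And>h. 0 < h \<Longrightarrow> h < d1 \<Longrightarrow> poly p x1 < poly p (x1 + h)"
    using DERIV_pos_inc_right[OF poly_DERIV pderiv_pos[OF root1]] by blast
  obtain h1 where "0 < h1" "h1 < d1" "h1 < z - x1"
    using field_lbound_gt_zero[of d1 "z - x1"] \<open>d1 > 0\<close> \<open>x1 < z\<close> by auto
  define u where "u = x1 + h1"
  have "x1 < u" "u < z" "poly p u > 0"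
    using d1 \<open>0 < h1\<close> \<open>h1 < d1\<close> \<open>h1 < z - x1\<close> root1 by (auto simp: u_def)
  obtain d2 where "d2 > 0" and d2: "\<And>h. 0 < h \<Longrightarrow> h < d2 \<Longrightarrow> poly p (z - h) < poly p z"
    using DERIV_pos_inc_left[OF poly_DERIV pderiv_pos[OF root_z]] by blast
  obtain h2 where "0 < h2" "h2 < d2" "h2 < z - u"
    using field_lbound_gt_zero[of d2 "z - u"] \<open>d2 > 0\<close> \<open>u < z\<close> by auto
  define v where "v = z - h2"
  have "u < v" "v < z" "poly p v < 0"
    using d2 \<open>0 < h2\<close> \<open>h2 < d2\<close> \<open>h2 < z - u\<close> root_z by (auto simp: v_def)
  then obtain w where "u < w" "w < v" "poly p w = 0"
    using poly_IVT_neg \<open>poly p u > 0\<close> by blast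
  then have "w \<in> R"
    using \<open>x1 < u\<close> \<open>v < z\<close> \<open>Min R \<in> R\<close> by (auto simp: R_def z_def)
  then show False
    using R_min \<open>w < v\<close> \<open>v < z\<close> unfolding z_def by fastforce
qed

lemma num_real_roots_eq_1:
  fixes p :: "real poly"
  assumes "poly p a < 0" and "poly p b > 0"
    and pderiv_pos: "\<And>x. poly p x = 0 \<Longrightarrow> poly (pderiv p) x > 0"
  shows "num_real_roots p = 1"
proof -
  have "p \<noteq> 0"
    using \<open>poly p b > 0\<close> by auto
  have "a \<noteq> b"
    using assms(1,2) by auto
  then obtain x0 where root: "poly p x0 = 0"
    using poly_IVT[of a b p] poly_IVT[of b a p] assms(1,2)
    by (metis linorder_neq_iff mult_neg_pos mult_pos_neg)
  have "order x0 (pderiv p) = 0"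
    using pderiv_pos[OF root] order_root[of "pderiv p" x0] by auto
  then have "order x0 p = 1"
    using order_pderiv[OF \<open>p \<noteq> 0\<close> root] by simp
  moreover have "order x p = 0" if "x \<noteq> x0" for x
    using roots_unique_if_pderiv_pos[OF \<open>p \<noteq> 0\<close> pderiv_pos root] that order_root[of p x] by auto
  ultimately have "proots p = {#x0#}"
    using \<open>p \<noteq> 0\<close> by (intro multiset_eqI) auto
  then show ?thesis
    by (simp add: num_real_roots_def)
qed

lemma parity_roots_property_intro:
  assumes pos: "\<And>i. a i > 0"
    and even: "\<And>n x. even n \<Longrightarrow> poly (partial_poly a n) x > 0"
    and odd: "\<And>n x. odd n \<Longrightarrow> poly (partial_poly a n) x = 0 \<Longrightarrow>
                poly (pderiv (partial_poly a n)) x > 0"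
  shows "parity_roots_property a"
  unfolding parity_roots_property_def
proof
  fix n
  show "num_real_roots (partial_poly a n) = n mod 2"
  proof (cases "even n")
    case True
    then show ?thesis
      using even num_real_roots_eq_0 by (metis less_irrefl even_iff_mod_2_eq_zero)
  next
    case False
    obtain b where "poly (partial_poly a n) b < 0"
      using poly_partial_poly_odd_neg[OF _ pos False] pos by (meson less_imp_le)
    moreover have "poly (partial_poly a n) 0 > 0"
      using pos by (intro poly_partial_poly_pos) (auto intro: less_imp_le)
    ultimately have "num_real_roots (partial_poly a n) = 1"
      using odd[OF False] by (intro num_real_roots_eq_1)
    then show ?thesis
      using False by (simp add: odd_iff_mod_2_eq_one)
  qed
qed

definition log_convex_seq :: "(nat \<Rightarrow> real) \<Rightarrow> bool" where
  "log_convex_seq a \<longleftrightarrow> (\<forall>i. a i > 0) \<and> (\<forall>i. a (Suc i) ^ 2 \<le> a i * a (Suc (Suc i)))"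

lemma log_convex_seq_pos: "log_convex_seq a \<Longrightarrow> a i > 0"
  by (simp add: log_convex_seq_def)

lemma log_convex_seq_ratio:
  assumes "a 0 > 0" and a_Suc: "\<And>n. a (Suc n) = r n * a n"
    and r_pos: "\<And>n. r n > 0" and r_mono: "\<And>n. r n \<le> r (Suc n)"
  shows "log_convex_seq a"
proof -
  have pos: "a i > 0" for i
    by (induction i) (simp_all add: assms)
  have "a (Suc i) ^ 2 \<le> a i * a (Suc (Suc i))" for i
  proof -
    have "a (Suc i) ^ 2 = r i * r i * (a i * a i)"
      by (simp add: a_Suc power2_eq_square)
    also have "\<dots> \<le> r i * r (Suc i) * (a i * a i)"
      using r_pos r_mono pos by (intro mult_right_mono mult_left_mono) (auto intro: less_imp_le)
    also have "\<dots> = a i * a (Suc (Suc i))"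
      by (simp add: a_Suc)
    finally show ?thesis .
  qed
  then show ?thesis
    using pos by (simp add: log_convex_seq_def)
qed

lemma log_convex_seq_scale:
  assumes "log_convex_seq a" and "t > 0"
  shows "log_convex_seq (\<lambda>i. a i * t ^ i)"
proof -
  have "(a (Suc i) * t ^ Suc i) ^ 2 \<le> a i * t ^ i * (a (Suc (Suc i)) * t ^ Suc (Suc i))" for i
  proof -
    have "(a (Suc i) * t ^ Suc i) ^ 2 = a (Suc i) ^ 2 * (t ^ Suc i) ^ 2"
      by (rule power_mult_distrib)
    also have "\<dots> \<le> a i * a (Suc (Suc i)) * (t ^ Suc i) ^ 2"
      using assms by (intro mult_right_mono) (simp_all add: log_convex_seq_def)
    also have "\<dots> = a i * t ^ i * (a (Suc (Suc i)) * t ^ Suc (Suc i))"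
      by (simp add: power2_eq_square mult_ac)
    finally show ?thesis .
  qed
  then show ?thesis
    using assms by (simp add: log_convex_seq_def log_convex_seq_pos)
qed

lemma log_convex_seq_valley:
  assumes "log_convex_seq c"
  obtains m where "\<And>i. i < m \<Longrightarrow> c (Suc i) \<le> c i"
    and "\<And>i. m \<le> i \<Longrightarrow> i < n \<Longrightarrow> c i \<le> c (Suc i)"
proof (cases "\<exists>i<n. c i \<le> c (Suc i)")
  case False
  then show ?thesis
    by (intro that[of n]) (auto simp: not_le intro: less_imp_le)
next
  case True
  define P where "P i \<longleftrightarrow> i < n \<and> c i \<le> c (Suc i)" for i
  define m where "m = (LEAST i. P i)"
  have "P m"
    unfolding m_def by (rule LeastI_ex) (use True P_def in blast)
  then have "m < n" and "c m \<le> c (Suc m)"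
    by (auto simp: P_def)
  have down: "c (Suc i) \<le> c i" if "i < m" for i
  proof -
    have "\<not> P i"
      using that unfolding m_def by (rule not_less_Least)
    then show ?thesis
      using that \<open>m < n\<close> by (simp add: P_def)
  qed
  have increase_step: "c (Suc i) \<le> c (Suc (Suc i))" if "c i \<le> c (Suc i)" for i
  proof -
    have "c (Suc i) * c (Suc i) \<le> c i * c (Suc (Suc i))"
      using assms by (simp add: log_convex_seq_def flip: power2_eq_square)
    also have "\<dots> \<le> c (Suc i) * c (Suc (Suc i))"
      using that assms by (intro mult_right_mono) (auto simp: log_convex_seq_def intro: less_imp_le)
    finally show ?thesis
      using log_convex_seq_pos[OF assms] by (simp add: mult_le_cancel_left_pos)
  qed
  have "c i \<le> c (Suc i)" if "m \<le> i" for i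
    using that
  proof (induction i rule: dec_induct)
    case base
    then show ?case by (rule \<open>c m \<le> c (Suc m)\<close>)
  next
    case (step i)
    then show ?case using increase_step by blast
  qed
  then show ?thesis
    using that down by blast
qed

lemma alternating_sum_even_eq:
  "(\<Sum>i\<le>2 * k. (-1) ^ i * c i) = c (2 * k) + (\<Sum>j<k. c (2 * j) - c (2 * j + 1) :: real)"
  by (induction k) (simp_all add: algebra_simps)

lemma alternating_sum_odd_eq:
  "(\<Sum>i\<le>2 * k + 1. (-1) ^ i * c i) = (\<Sum>j\<le>k. c (2 * j) - c (2 * j + 1) :: real)"
  by (induction k) (simp_all add: algebra_simps)

lemma alternating_sum_valley_pos:
  fixes c :: "nat \<Rightarrow> real"
  assumes pos: "\<And>i. c i > 0" and down: "\<And>i. i < m \<Longrightarrow> c (Suc i) \<le> c i"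
    and up: "\<And>i. m \<le> i \<Longrightarrow> i < 2 * k \<Longrightarrow> c i \<le> c (Suc i)"
  shows "(\<Sum>i\<le>2 * k. (-1) ^ i * c i) > 0"
  using up
proof (induction k)
  case 0
  then show ?case using pos by simp
next
  case (Suc k)
  show ?case
  proof (cases "m \<le> 2 * k + 1")
    case True
    have "(\<Sum>i\<le>2 * k. (-1) ^ i * c i) > 0"
      using Suc by simp
    moreover have "c (2 * k + 1) \<le> c (2 * k + 2)"
      using Suc.prems[of "2 * k + 1"] True by simp
    ultimately show ?thesis
      by simp
  next
    case False
    have "(\<Sum>j<Suc k. c (2 * j) - c (2 * j + 1)) \<ge> 0"
      using False down by (intro sum_nonneg) fastforce
    then show ?thesis
      unfolding alternating_sum_even_eq using pos[of "2 * Suc k"] by linarith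
  qed
qed

lemma alternating_weighted_sum_valley_pos:
  fixes c :: "nat \<Rightarrow> real"
  assumes pos: "\<And>i. c i > 0" and down: "\<And>i. i < m \<Longrightarrow> c (Suc i) \<le> c i"
    and up: "\<And>i. m \<le> i \<Longrightarrow> i < 2 * k + 1 \<Longrightarrow> c i \<le> c (Suc i)"
  shows "(\<Sum>i\<le>2 * k + 1. (-1) ^ i * ((real m - real i) * c i)) > 0"
  unfolding alternating_sum_odd_eq
proof (intro sum_pos)
  fix j assume "j \<in> {..k}"
  show "(real m - real (2 * j)) * c (2 * j) - (real m - real (2 * j + 1)) * c (2 * j + 1) > 0"
  proof (cases "2 * j < m")
    case True
    then have "(real m - real (2 * j)) * c (2 * j + 1) \<le> (real m - real (2 * j)) * c (2 * j)"
      using down[of "2 * j"] by (intro mult_left_mono) auto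
    then show ?thesis
      using pos[of "2 * j + 1"] by (simp add: algebra_simps)
  next
    case False
    then have "(real (2 * j) - real m) * c (2 * j) \<le> (real (2 * j) - real m) * c (2 * j + 1)"
      using up[of "2 * j"] \<open>j \<in> {..k}\<close> by (intro mult_left_mono) auto
    then show ?thesis
      using pos[of "2 * j + 1"] by (simp add: algebra_simps)
  qed
qed auto

lemma poly_partial_poly_log_convex_even_pos:
  assumes "log_convex_seq a" and "even n"
  shows "poly (partial_poly a n) x > 0"
proof (cases "x \<ge> 0")
  case True
  then show ?thesis
    using assms(1) by (intro poly_partial_poly_pos) (auto simp: log_convex_seq_pos less_imp_le)
next
  case False
  define c where "c i = a i * (-x) ^ i" for i
  have "log_convex_seq c"
    unfolding c_def using assms(1) False by (intro log_convex_seq_scale) auto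
  obtain m where "\<And>i. i < m \<Longrightarrow> c (Suc i) \<le> c i"
    and "\<And>i. m \<le> i \<Longrightarrow> i < n \<Longrightarrow> c i \<le> c (Suc i)"
    using \<open>log_convex_seq c\<close> log_convex_seq_valley by metis
  moreover obtain k where "n = 2 * k"
    using \<open>even n\<close> by blast
  ultimately show ?thesis
    using alternating_sum_valley_pos[of c m k] log_convex_seq_pos[OF \<open>log_convex_seq c\<close>]
    by (simp add: poly_partial_poly_reflect c_def)
qed

text \<open>With \<open>c i = a i * (-x) ^ i\<close> and \<open>m\<close> the bottom of the valley of \<open>c\<close>, the positive sum
  \<open>\<Sum>i\<le>n. (-1) ^ i * (m - i) * c i\<close> equals \<open>m * p x - x * p' x\<close>, which is \<open>-x * p' x\<close> at a root.\<close>
lemma pderiv_partial_poly_log_convex_pos_at_root: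
  assumes "log_convex_seq a" and "odd n" and root: "poly (partial_poly a n) x = 0"
  shows "poly (pderiv (partial_poly a n)) x > 0"
proof -
  have "x < 0"
    using poly_partial_poly_pos[of a x n] assms(1) root
    by (force simp: log_convex_seq_pos less_imp_le)
  define c where "c i = a i * (-x) ^ i" for i
  have "log_convex_seq c"
    unfolding c_def using assms(1) \<open>x < 0\<close> by (intro log_convex_seq_scale) auto
  obtain m where "\<And>i. i < m \<Longrightarrow> c (Suc i) \<le> c i"
    and "\<And>i. m \<le> i \<Longrightarrow> i < n \<Longrightarrow> c i \<le> c (Suc i)"
    using \<open>log_convex_seq c\<close> log_convex_seq_valley by metis
  moreover obtain k where "n = 2 * k + 1"
    using \<open>odd n\<close> by (blast elim: oddE)
  ultimately have "(\<Sum>i\<le>n. (-1) ^ i * ((real m - real i) * c i)) > 0"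
    using alternating_weighted_sum_valley_pos[of c m k] log_convex_seq_pos[OF \<open>log_convex_seq c\<close>]
    by simp
  also have "(\<Sum>i\<le>n. (-1) ^ i * ((real m - real i) * c i))
      = real m * poly (partial_poly a n) x - x * poly (pderiv (partial_poly a n)) x"
    unfolding poly_partial_poly_reflect poly_pderiv_partial_poly sum_distrib_left
      sum_subtractf[symmetric] c_def
    by (intro sum.cong) (simp_all add: power_minus[of x] algebra_simps)
  finally show ?thesis
    using root \<open>x < 0\<close> by (simp add: mult_less_0_iff)
qed

lemma parity_roots_property_log_convex:
  "log_convex_seq a \<Longrightarrow> parity_roots_property a"
  by (intro parity_roots_property_intro log_convex_seq_pos
      poly_partial_poly_log_convex_even_pos pderiv_partial_poly_log_convex_pos_at_root)

lemma binomial_partial_sum_shift: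
  "(1 - x) * (\<Sum>i\<le>n. real ((i + Suc k) choose Suc k) * x ^ i)
     = (\<Sum>i\<le>n. real ((i + k) choose k) * x ^ i) - real ((n + Suc k) choose Suc k) * x ^ Suc n"
proof (induction n)
  case 0
  then show ?case by simp
next
  case (Suc n)
  have "real ((Suc n + Suc k) choose Suc k) = real ((Suc n + k) choose k) + real ((n + Suc k) choose Suc k)"
    by simp
  then show ?case
    using Suc by (simp add: algebra_simps)
qed

text \<open>Multiplying by \<open>1 - x\<close> lowers \<open>k\<close> by one; for \<open>k = 0\<close> one gets \<open>1 - x ^ (n + 1)\<close>.\<close>
lemma poly_binomial_partial_poly_even_pos:
  assumes "even n"
  shows "poly (partial_poly (\<lambda>i. real ((i + k) choose k)) n) x > 0"
proof (cases "x \<ge> 0")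
  case True
  then show ?thesis
    by (intro poly_partial_poly_pos) auto
next
  case False
  then have "x ^ Suc n < 0"
    using assms by (simp add: mult_neg_pos zero_less_power_eq)
  show ?thesis
  proof (induction k)
    case 0
    have "(1 - x) * poly (partial_poly (\<lambda>i. real ((i + 0) choose 0)) n) x = 1 - x ^ Suc n"
      by (simp add: poly_partial_poly sum_gp_basic)
    then have "(1 - x) * poly (partial_poly (\<lambda>i. real ((i + 0) choose 0)) n) x > 0"
      using \<open>x ^ Suc n < 0\<close> by simp
    then show ?case
      by (rule zero_less_mult_pos) (use False in simp)
  next
    case (Suc k)
    have "real ((n + Suc k) choose Suc k) * x ^ Suc n \<le> 0"
      using \<open>x ^ Suc n < 0\<close> by (simp add: mult_nonneg_nonpos)
    then have "(1 - x) * poly (partial_poly (\<lambda>i. real ((i + Suc k) choose Suc k)) n) x > 0"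
      using Suc.IH unfolding poly_partial_poly binomial_partial_sum_shift by linarith
    then show ?case
      by (rule zero_less_mult_pos) (use False in simp)
  qed
qed

lemma poly_pderiv_binomial_partial_poly:
  "poly (pderiv (partial_poly (\<lambda>i. real ((i + k) choose k)) (Suc n))) x
     = real (Suc k) * poly (partial_poly (\<lambda>i. real ((i + Suc k) choose Suc k)) n) x"
proof -
  have "Suc j * ((Suc j + k) choose k) = Suc k * ((j + Suc k) choose Suc k)" for j
    using Suc_times_binomial_add[of k j] by (simp add: add.commute)
  then have "real (Suc j) * real ((Suc j + k) choose k) = real (Suc k) * real ((j + Suc k) choose Suc k)" for j
    by (metis of_nat_mult)
  then show ?thesis
    unfolding pderiv_partial_poly_Suc poly_partial_poly sum_distrib_left
    by (intro sum.cong) (simp_all add: mult.assoc del: binomial_Suc_Suc)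
qed

lemma parity_roots_property_binomial:
  "parity_roots_property (\<lambda>n. real ((n + k) choose k))"
proof (rule parity_roots_property_intro)
  fix n :: nat and x :: real
  show "even n \<Longrightarrow> poly (partial_poly (\<lambda>n. real ((n + k) choose k)) n) x > 0"
    by (rule poly_binomial_partial_poly_even_pos)
  assume "odd n"
  then obtain m where "n = Suc m" and "even m"
    by (cases n) auto
  then show "poly (pderiv (partial_poly (\<lambda>n. real ((n + k) choose k)) n)) x > 0"
    using poly_binomial_partial_poly_even_pos[of m "Suc k" x]
    by (simp add: poly_pderiv_binomial_partial_poly)
qed simp

lemma central_binomial_Suc: "(2 * Suc n) choose Suc n = 2 * ((2 * n + 1) choose n)"
proof -
  have "Suc n * ((2 * Suc n) choose Suc n) = Suc n * (2 * ((2 * n + 1) choose n))"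
    using Suc_times_binomial[of n "Suc (2 * n)"] by (simp add: algebra_simps del: binomial_Suc_Suc)
  then show ?thesis
    by (simp only: mult_cancel1) simp
qed

lemma Suc_times_binomial_double_plus_one:
  "Suc n * ((2 * n + 1) choose n) = (2 * n + 1) * ((2 * n) choose n)"
proof -
  have "Suc (2 * n) * ((2 * n) choose n) = (Suc (2 * n) choose Suc n) * Suc n"
    by (rule Suc_times_binomial_eq)
  moreover have "Suc (2 * n) choose Suc n = (2 * n + 1) choose n"
    using binomial_symmetric[of "Suc n" "Suc (2 * n)"] by simp
  ultimately show ?thesis
    by (simp add: mult.commute)
qed

lemma central_binomial_recurrence:
  "real ((2 * Suc n) choose Suc n) = 2 * (2 * real n + 1) / (real n + 1) * real ((2 * n) choose n)"
proof -
  have "real (Suc n) * real ((2 * n + 1) choose n) = real (2 * n + 1) * real ((2 * n) choose n)"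
    using Suc_times_binomial_double_plus_one[of n] by (metis of_nat_mult)
  then show ?thesis
    unfolding central_binomial_Suc by (simp add: field_simps del: binomial_Suc_Suc)
qed

lemma catalan_recurrence:
  "real ((2 * Suc n) choose Suc n) / real (Suc n + 1)
     = 2 * (2 * real n + 1) / (real n + 2) * (real ((2 * n) choose n) / real (n + 1))"
  unfolding central_binomial_recurrence by (simp add: field_simps del: binomial_Suc_Suc)

lemma binomial_double_plus_one_recurrence:
  "real ((2 * Suc n + 1) choose Suc n) = 2 * (2 * real n + 3) / (real n + 2) * real ((2 * n + 1) choose n)"
proof -
  have half: "real ((2 * m + 1) choose m) = real ((2 * Suc m) choose Suc m) / 2" for m
    unfolding central_binomial_Suc by simp
  show ?thesis
    unfolding half central_binomial_recurrence[of "Suc n"] by (simp add: field_simps del: binomial_Suc_Suc)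
qed

lemma odd_dfact_Suc: "odd_dfact (Suc n) = odd_dfact n * (2 * n + 1)"
  by (simp add: odd_dfact_def prod.cl_ivl_Suc)

lemma even_dfact_Suc: "even_dfact (Suc n) = even_dfact n * (2 * n + 2)"
  by (simp add: even_dfact_def prod.cl_ivl_Suc)

theorem mainTheorem7:
  shows "(\<forall>k::nat. parity_roots_property (\<lambda>n. real ((n + k) choose k)))
       \<and> parity_roots_property (\<lambda>n. real ((2 * n) choose n) / real (n + 1))
       \<and> parity_roots_property (\<lambda>n. real ((2 * n) choose n))
       \<and> parity_roots_property (\<lambda>n. real ((2 * n + 1) choose n))
       \<and> parity_roots_property (\<lambda>n. real (fact n))
       \<and> parity_roots_property (\<lambda>n. real (odd_dfact n))
       \<and> parity_roots_property (\<lambda>n. real (even_dfact n))"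
proof (intro conjI allI)
  show "parity_roots_property (\<lambda>n. real ((n + k) choose k))" for k
    by (rule parity_roots_property_binomial)
  show "parity_roots_property (\<lambda>n. real ((2 * n) choose n) / real (n + 1))"
    by (intro parity_roots_property_log_convex
        log_convex_seq_ratio[where r = "\<lambda>n. 2 * (2 * real n + 1) / (real n + 2)"] catalan_recurrence)
      (simp_all add: field_simps)
  show "parity_roots_property (\<lambda>n. real ((2 * n) choose n))"
    by (intro parity_roots_property_log_convex
        log_convex_seq_ratio[where r = "\<lambda>n. 2 * (2 * real n + 1) / (real n + 1)"]
        central_binomial_recurrence)
      (simp_all add: field_simps)
  show "parity_roots_property (\<lambda>n. real ((2 * n + 1) choose n))"
    by (intro parity_roots_property_log_convex
        log_convex_seq_ratio[where r = "\<lambda>n. 2 * (2 * real n + 3) / (real n + 2)"]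
        binomial_double_plus_one_recurrence)
      (simp_all add: field_simps)
  show "parity_roots_property (\<lambda>n. real (fact n))"
    by (intro parity_roots_property_log_convex log_convex_seq_ratio[where r = "\<lambda>n. real n + 1"])
      (simp_all add: algebra_simps)
  show "parity_roots_property (\<lambda>n. real (odd_dfact n))"
    by (intro parity_roots_property_log_convex log_convex_seq_ratio[where r = "\<lambda>n. 2 * real n + 1"])
      (simp_all add: odd_dfact_Suc odd_dfact_def[of 0] algebra_simps)
  show "parity_roots_property (\<lambda>n. real (even_dfact n))"
    by (intro parity_roots_property_log_convex log_convex_seq_ratio[where r = "\<lambda>n. 2 * real n + 2"])
      (simp_all add: even_dfact_Suc even_dfact_def[of 0] algebra_simps)
qed

end
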